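(* Assume $CA_3$. Then there is a coloring $c:[\omega_1]^2\to\omega_1$ such that: (1) $c$ is $2$-bounded; (2) $c$ has no uncountable injective set; (3) $c$ is ccc-destructible, i.e. there is a ccc partial order forcing that $c$ has an uncountable injective set.
   Context: A coloring $c:[\omega_1]^2\to\omega_1$ is $2$-bounded if $|c^{-1}[\{\xi\}]|\le2$ for every $\xi\in\omega_1$. A set $A\subseteq\omega_1$ is injective (for $c$) if $c|_{[A]^2}$ is injective. A type is a sequence $\tau=\{(m_k,n_{k+1},r_{k+1})\}_{k\in\omega}$ of natural numbers with $m_0=1$; $n_k\ge2$ for $k\ge1$; every $r\in\omega$ equals $r_k$ for infinitely many $k$; $m_k>r_{k+1}$; and $m_{k+1}=r_{k+1}+(m_k-r_{k+1})n_{k+1}$ for all $k$. For a set of ordinals $X$ and $\mathcal F\subseteq[X]^{<\omega}$, $\mathcal F_k$ is the set of elements of rank $k$ in $(\mathcal F,\subsetneq)$; $A\sqsubseteq B$ means $A\subseteq B$ and every element of $B$ below an element of $A$ is in $A$; $A<B$ means every element of $A$ is below every element of $B$. $\mathcal F$ is a construction scheme over $X$ of type $\tau$ if (1) every finite subset of $X$ lies in a member of $\mathcal F$; (2) $|F|=m_k$ for $F\in\mathcal F_k$; (3) $E\cap F\sqsubseteq E,F$ for $E,F\in\mathcal F_k$; (4) each $F\in\mathcal F_{k+1}$ is the union of uniquely determined $F_0,\dots,F_{n_{k+1}-1}\in\mathcal F_k$ forming a $\Delta$-system with root $R(F)$, $|R(F)|=r_{k+1}$, $R(F)<F_0\setminus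 R(F)<\dots<F_{n_{k+1}-1}\setminus R(F)$. For a construction scheme $\mathcal F$ over $\omega_1$, $l\ge1$, $F\in\mathcal F_l$ and finite $\mathcal C\subseteq[\omega_1]^{<\omega}$: $F$ captures $\mathcal C$ if $|\mathcal C|\le n_l$ and $\mathcal C$ can be enumerated as $\{c_i\}_{i<|\mathcal C|}$ with $c_i\subseteq F_i$, $c_i\setminus R(F)\neq\emptyset$ and $\phi_i[c_0]=c_i$ where $\phi_i:F_0\to F_i$ is the increasing bijection. $\mathcal F$ is $n$-capturing if for every uncountable $S\subseteq[\omega_1]^{<\omega}$ and every $k\in\omega$ there are $\mathcal C\in[S]^n$, $l>k$ and $F\in\mathcal F_l$ capturing $\mathcal C$. $CA_n$ is the statement: for every type $\tau$ with $n\le n_k$ for all $k\ge1$ there is an $n$-capturing construction scheme over $\omega_1$ of type $\tau$. *)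

theory Defs
  imports Main "HOL-Library.Countable_Set"
begin

definition omega1_type :: "'a::wellorder itself \<Rightarrow> bool" where
  "omega1_type (T::'a itself) \<longleftrightarrow>
     uncountable (UNIV :: 'a set) \<and> (\<forall>x::'a. countable {y. y < x})"

definition seg_le :: "'a::linorder set \<Rightarrow> 'a set \<Rightarrow> bool" where
  "seg_le A B \<longleftrightarrow> A \<subseteq> B \<and> (\<forall>b\<in>B. \<forall>a\<in>A. b < a \<longrightarrow> b \<in> A)"

definition set_less :: "'a::linorder set \<Rightarrow> 'a set \<Rightarrow> bool" where
  "set_less A B \<longleftrightarrow> (\<forall>a\<in>A. \<forall>b\<in>B. a < b)"

text \<open>A type is given by m, n, r :: nat => nat; only m k (k>=0), n k, r k (k>=1) matter.\<close>
definition is_type :: "(nat \<Rightarrow> nat) \<Rightarrow> (nat \<Rightarrow> nat) \<Rightarrow> (nat \<Rightarrow> nat) \<Rightarrow> bool" where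
  "is_type m n r \<longleftrightarrow>
     m 0 = 1 \<and> (\<forall>k\<ge>1. n k \<ge> 2) \<and> (\<forall>x. infinite {k. k \<ge> 1 \<and> r k = x}) \<and>
     (\<forall>k. r (Suc k) < m k \<and> m (Suc k) = r (Suc k) + (m k - r (Suc k)) * n (Suc k))"

text \<open>rk_le F k E: every member of F properly below E has rank < k, i.e. rank E <= k.\<close>
inductive rk_le :: "'a set set \<Rightarrow> nat \<Rightarrow> 'a set \<Rightarrow> bool" for \<F> :: "'a set set" where
  "(\<forall>E\<in>\<F>. E \<subset> F \<longrightarrow> (\<exists>j<k. rk_le \<F> j E)) \<Longrightarrow> rk_le \<F> k F"

definition level :: "'a set set \<Rightarrow> nat \<Rightarrow> 'a set set" where
  "level \<F> k = {F \<in> \<F>. rk_le \<F> k F \<and> (\<forall>j<k. \<not> rk_le \<F> j F)}"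

definition is_decomp ::
  "'a::linorder set set \<Rightarrow> (nat \<Rightarrow> nat) \<Rightarrow> (nat \<Rightarrow> nat) \<Rightarrow> nat \<Rightarrow> 'a set \<Rightarrow> 'a set list \<Rightarrow> 'a set \<Rightarrow> bool"
  where
  "is_decomp \<F> n r k F Fs R \<longleftrightarrow>
     length Fs = n (Suc k) \<and> set Fs \<subseteq> level \<F> k \<and> F = \<Union>(set Fs) \<and>
     (\<forall>i j. i < j \<longrightarrow> j < length Fs \<longrightarrow> Fs ! i \<inter> Fs ! j = R) \<and>
     card R = r (Suc k) \<and>
     set_less R (Fs ! 0 - R) \<and>
     (\<forall>i. Suc i < length Fs \<longrightarrow> set_less (Fs ! i - R) (Fs ! Suc i - R))"

definition construction_scheme ::
  "'a::linorder set set \<Rightarrow> (nat \<Rightarrow> nat) \<Rightarrow> (nat \<Rightarrow> nat) \<Rightarrow> (nat \<Rightarrow> nat) \<Rightarrow> bool" where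
  "construction_scheme \<F> m n r \<longleftrightarrow>
     (\<forall>F\<in>\<F>. finite F) \<and>
     (\<forall>A. finite A \<longrightarrow> (\<exists>F\<in>\<F>. A \<subseteq> F)) \<and>
     (\<forall>k. \<forall>F\<in>level \<F> k. card F = m k) \<and>
     (\<forall>k. \<forall>E\<in>level \<F> k. \<forall>F\<in>level \<F> k. seg_le (E \<inter> F) E \<and> seg_le (E \<inter> F) F) \<and>
     (\<forall>k. \<forall>F\<in>level \<F> (Suc k). \<exists>!Fs. \<exists>R. is_decomp \<F> n r k F Fs R)"

definition blocks ::
  "'a::linorder set set \<Rightarrow> (nat \<Rightarrow> nat) \<Rightarrow> (nat \<Rightarrow> nat) \<Rightarrow> nat \<Rightarrow> 'a set \<Rightarrow> 'a set list" where
  "blocks \<F> n r k F = (THE Fs. \<exists>R. is_decomp \<F> n r k F Fs R)"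

definition root ::
  "'a::linorder set set \<Rightarrow> (nat \<Rightarrow> nat) \<Rightarrow> (nat \<Rightarrow> nat) \<Rightarrow> nat \<Rightarrow> 'a set \<Rightarrow> 'a set" where
  "root \<F> n r k F = (THE R. is_decomp \<F> n r k F (blocks \<F> n r k F) R)"

definition inc_map :: "'a::linorder set \<Rightarrow> 'a set \<Rightarrow> 'a \<Rightarrow> 'a" where
  "inc_map A B x = sorted_list_of_set B ! card {y\<in>A. y < x}"

definition captures ::
  "'a::linorder set set \<Rightarrow> (nat \<Rightarrow> nat) \<Rightarrow> (nat \<Rightarrow> nat) \<Rightarrow> nat \<Rightarrow> 'a set \<Rightarrow> 'a set set \<Rightarrow> bool" where
  "captures \<F> n r l F C \<longleftrightarrow>
     l \<ge> 1 \<and> F \<in> level \<F> l \<and> finite C \<and> card C \<le> n l \<and>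
     (let Fs = blocks \<F> n r (l - 1) F; R = root \<F> n r (l - 1) F in
      \<exists>cs. distinct cs \<and> set cs = C \<and>
        (\<forall>i<length cs. cs ! i \<subseteq> Fs ! i \<and> cs ! i - R \<noteq> {} \<and>
                        inc_map (Fs ! 0) (Fs ! i) ` (cs ! 0) = cs ! i))"

definition capturing ::
  "nat \<Rightarrow> 'a::linorder set set \<Rightarrow> (nat \<Rightarrow> nat) \<Rightarrow> (nat \<Rightarrow> nat) \<Rightarrow> bool" where
  "capturing N \<F> n r \<longleftrightarrow>
     (\<forall>S. (\<forall>s\<in>S. finite s) \<longrightarrow> uncountable S \<longrightarrow>
        (\<forall>k. \<exists>C\<subseteq>S. finite C \<and> card C = N \<and> (\<exists>l>k. \<exists>F. captures \<F> n r l F C)))"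

definition CA :: "nat \<Rightarrow> 'a::linorder itself \<Rightarrow> bool" where
  "CA N (T::'a itself) \<longleftrightarrow>
     (\<forall>m n r. is_type m n r \<longrightarrow> (\<forall>k\<ge>1. N \<le> n k) \<longrightarrow>
        (\<exists>\<F>::'a set set. construction_scheme \<F> m n r \<and> capturing N \<F> n r))"

definition pairs :: "'a set \<Rightarrow> 'a set set" where
  "pairs A = {e. e \<subseteq> A \<and> card e = 2}"

definition two_bounded :: "('a set \<Rightarrow> 'a) \<Rightarrow> bool" where
  "two_bounded c \<longleftrightarrow> (\<forall>\<xi>. finite {e\<in>pairs UNIV. c e = \<xi>} \<and> card {e\<in>pairs UNIV. c e = \<xi>} \<le> 2)"

definition injective_set :: "('a set \<Rightarrow> 'a) \<Rightarrow> 'a set \<Rightarrow> bool" where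
  "injective_set c A \<longleftrightarrow> inj_on c (pairs A)"

definition partial_order_on' :: "'p set \<Rightarrow> ('p \<Rightarrow> 'p \<Rightarrow> bool) \<Rightarrow> bool" where
  "partial_order_on' P le \<longleftrightarrow>
     (\<forall>p\<in>P. le p p) \<and>
     (\<forall>p\<in>P. \<forall>q\<in>P. \<forall>s\<in>P. le p q \<longrightarrow> le q s \<longrightarrow> le p s) \<and>
     (\<forall>p\<in>P. \<forall>q\<in>P. le p q \<longrightarrow> le q p \<longrightarrow> p = q)"

definition compatible :: "'p set \<Rightarrow> ('p \<Rightarrow> 'p \<Rightarrow> bool) \<Rightarrow> 'p \<Rightarrow> 'p \<Rightarrow> bool" where
  "compatible P le p q \<longleftrightarrow> (\<exists>s\<in>P. le s p \<and> le s q)"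

definition is_ccc :: "'p set \<Rightarrow> ('p \<Rightarrow> 'p \<Rightarrow> bool) \<Rightarrow> bool" where
  "is_ccc P le \<longleftrightarrow>
     (\<forall>A\<subseteq>P. (\<forall>p\<in>A. \<forall>q\<in>A. p \<noteq> q \<longrightarrow> \<not> compatible P le p q) \<longrightarrow> countable A)"

text \<open>A (nice) P-name for a subset of the ground ordinals is a relation N between
conditions and ordinals: the name {(check alpha, p) | N p alpha}.
forces_mem P le N q alpha: q forces check alpha to belong to that name
(the standard definition of the forcing relation for this atomic formula).\<close>
definition forces_mem ::
  "'p set \<Rightarrow> ('p \<Rightarrow> 'p \<Rightarrow> bool) \<Rightarrow> ('p \<Rightarrow> 'a \<Rightarrow> bool) \<Rightarrow> 'p \<Rightarrow> 'a \<Rightarrow> bool" where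
  "forces_mem P le N q \<alpha> \<longleftrightarrow>
     q \<in> P \<and> (\<forall>s\<in>P. le s q \<longrightarrow> (\<exists>t\<in>P. le t s \<and> (\<exists>p\<in>P. N p \<alpha> \<and> le t p)))"

text \<open>Every condition forces: the name is unbounded in omega_1 (for ccc P this is
equivalent to being forced uncountable, as omega_1 is preserved).\<close>
definition forces_unbounded ::
  "'p set \<Rightarrow> ('p \<Rightarrow> 'p \<Rightarrow> bool) \<Rightarrow> ('p \<Rightarrow> 'a::linorder \<Rightarrow> bool) \<Rightarrow> bool" where
  "forces_unbounded P le N \<longleftrightarrow>
     (\<forall>\<alpha>. \<forall>p\<in>P. \<exists>q\<in>P. le q p \<and> (\<exists>\<beta>>\<alpha>. forces_mem P le N q \<beta>))"

text \<open>Every condition forces: the name is an injective set for c, i.e. no condition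
forces two distinct pairs of the same colour into the name.\<close>
definition forces_injective ::
  "'p set \<Rightarrow> ('p \<Rightarrow> 'p \<Rightarrow> bool) \<Rightarrow> ('p \<Rightarrow> 'a \<Rightarrow> bool) \<Rightarrow> ('a set \<Rightarrow> 'a) \<Rightarrow> bool" where
  "forces_injective P le N c \<longleftrightarrow>
     (\<forall>e\<in>pairs UNIV. \<forall>e'\<in>pairs UNIV. e \<noteq> e' \<longrightarrow> c e = c e' \<longrightarrow>
        \<not> (\<exists>q\<in>P. \<forall>\<gamma>\<in>e \<union> e'. forces_mem P le N q \<gamma>))"

text \<open>ccc-destructible: some (nonempty) ccc partial order forces an uncountable
injective set. Posets are taken with carrier a set of subsets of the ground type
(i.e. of size at most 2^aleph_1).\<close>
definition ccc_destructible :: "('a::linorder set \<Rightarrow> 'a) \<Rightarrow> bool" where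
  "ccc_destructible c \<longleftrightarrow>
     (\<exists>(P::'a set set) le. P \<noteq> {} \<and> partial_order_on' P le \<and> is_ccc P le \<and>
        (\<exists>N. (\<forall>p \<alpha>. N p \<alpha> \<longrightarrow> p \<in> P) \<and>
             forces_unbounded P le N \<and> forces_injective P le N c))"

end

(*
  Fix a type with three blocks at every level and a 3-capturing construction scheme for it.
  Call x0 < x1 < x2 aligned if for some G of rank k + 1 the point x0 lies in G_0 outside the
  root and x1, x2 are its images in G_1, G_2 under the increasing bijections. The colouring
  gives both legs {x0, x2} and {x1, x2} of an aligned triple the code of the triple as colour
  and every other pair a colour of its own. By coherence of the scheme a pair is a leg of at
  most one aligned triple, so the colouring is 2-bounded, and a set is injective exactly when
  it contains no aligned triple. Capturing three singletons of an uncountable set yields an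
  aligned triple inside it. The finite injective sets, ordered by reverse inclusion, are ccc:
  capturing two conditions gives p and its copy q in the next block, and an aligned triple
  cannot straddle the two blocks, so p and q are compatible. Below a suitable condition the
  union of the generic filter is then an uncountable injective set.
*)

theory Submission
  imports Defs
begin

definition pos :: "'a::linorder set \<Rightarrow> 'a \<Rightarrow> nat" where
  "pos A x = card {y\<in>A. y < x}"

lemma pos_less_card: "finite A \<Longrightarrow> x \<in> A \<Longrightarrow> pos A x < card A"
  unfolding pos_def by (rule psubset_card_mono) auto

lemma pos_strict_mono: "finite A \<Longrightarrow> x \<in> A \<Longrightarrow> x < y \<Longrightarrow> pos A x < pos A y"
  unfolding pos_def by (rule psubset_card_mono) auto

lemma inj_on_pos: "finite A \<Longrightarrow> inj_on (pos A) A"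
  by (metis inj_onI less_irrefl linorder_neqE pos_strict_mono)

lemma sorted_list_of_set_nth_mem: "finite B \<Longrightarrow> i < card B \<Longrightarrow> sorted_list_of_set B ! i \<in> B"
  by (metis length_sorted_list_of_set nth_mem set_sorted_list_of_set)

lemma pos_sorted_list_of_set_nth:
  assumes "finite B" "i < card B"
  shows "pos B (sorted_list_of_set B ! i) = i"
proof -
  let ?xs = "sorted_list_of_set B"
  have less_iff: "?xs ! j < ?xs ! i \<longleftrightarrow> j < i" if "j < card B" for j
    using that assms sorted_nth_mono[of ?xs i j] sorted_wrt_nth_less[of "(<)" ?xs j i]
    by (auto simp: not_less[symmetric])
  have "{y\<in>B. y < ?xs ! i} = (!) ?xs ` {..<i}"
  proof
    show "{y\<in>B. y < ?xs ! i} \<subseteq> (!) ?xs ` {..<i}"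
    proof
      fix y assume "y \<in> {y\<in>B. y < ?xs ! i}"
      moreover obtain j where "j < card B" "y = ?xs ! j"
        using calculation assms(1) by (metis (no_types, lifting) in_set_conv_nth
            length_sorted_list_of_set mem_Collect_eq set_sorted_list_of_set)
      ultimately show "y \<in> (!) ?xs ` {..<i}"
        using less_iff by auto
    qed
    show "(!) ?xs ` {..<i} \<subseteq> {y\<in>B. y < ?xs ! i}"
      using assms less_iff by (auto intro: sorted_list_of_set_nth_mem)
  qed
  moreover have "inj_on ((!) ?xs) {..<i}"
    using assms by (intro inj_on_nth) auto
  ultimately show ?thesis
    unfolding pos_def by (simp add: card_image)
qed

lemma
  assumes "finite A" "finite B" "card A = card B" "x \<in> A"
  shows inc_map_mem: "inc_map A B x \<in> B"
    and pos_inc_map: "pos B (inc_map A B x) = pos A x"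
proof -
  have "pos A x < card B"
    using pos_less_card[OF assms(1,4)] assms(3) by simp
  then show "inc_map A B x \<in> B" "pos B (inc_map A B x) = pos A x"
    using assms(2) pos_sorted_list_of_set_nth[OF assms(2)]
    unfolding inc_map_def pos_def[symmetric]
    by (auto intro: sorted_list_of_set_nth_mem)
qed

lemma set_less_trans: "set_less A B \<Longrightarrow> set_less B C \<Longrightarrow> B \<noteq> {} \<Longrightarrow> set_less A C"
  unfolding set_less_def by (meson ex_in_conv order.strict_trans)

lemma
  assumes "R \<subseteq> B" "set_less R (B - R)"
  shows pos_initial_segment: "x \<in> R \<Longrightarrow> pos B x = pos R x"
    and card_initial_segment_le_pos: "finite B \<Longrightarrow> x \<in> B - R \<Longrightarrow> card R \<le> pos B x"
proof -
  show "pos B x = pos R x" if "x \<in> R"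
  proof -
    have "{y\<in>B. y < x} = {y\<in>R. y < x}"
      using assms that unfolding set_less_def by (auto dest: order.asym)
    then show ?thesis unfolding pos_def by simp
  qed
  show "card R \<le> pos B x" if "finite B" "x \<in> B - R"
    unfolding pos_def
    using assms that unfolding set_less_def by (intro card_mono) auto
qed

section \<open>Separated subsets of omega_1\<close>

lemma omega1_countable_bounded:
  assumes "omega1_type TYPE('a::wellorder)" and "countable (X :: 'a set)"
  obtains z where "\<forall>x\<in>X. x < z"
proof -
  have "countable {y. y \<le> x}" for x :: 'a
    using assms(1) unfolding omega1_type_def le_less by (simp add: Collect_disj_eq)
  then have "countable (\<Union>x\<in>X. {y. y \<le> x})"
    using assms(2) by blast
  moreover have "uncountable (UNIV :: 'a set)"
    using assms(1) unfolding omega1_type_def by blast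
  ultimately obtain z where "z \<notin> (\<Union>x\<in>X. {y. y \<le> x})"
    by (metis UNIV_I subsetI subset_antisym)
  then show thesis
    using that by (auto simp: not_le)
qed

definition separated :: "('a::linorder \<Rightarrow> 'a) \<Rightarrow> 'a set \<Rightarrow> bool" where
  "separated f M \<longleftrightarrow> (\<forall>\<beta>\<in>M. \<forall>\<gamma>\<in>M. \<beta> < \<gamma> \<longrightarrow> f \<beta> < \<gamma>)"

lemma separated_chain_Union:
  assumes C: "C \<in> chains {M. separated f M}"
  shows "separated f (\<Union>C)"
  unfolding separated_def
proof (intro ballI impI)
  fix \<beta> \<gamma> assume "\<beta> \<in> \<Union>C" "\<gamma> \<in> \<Union>C" "\<beta> < \<gamma>"
  then obtain M\<beta> M\<gamma> where "M\<beta> \<in> C" "\<beta> \<in> M\<beta>" "M\<gamma> \<in> C" "\<gamma> \<in> M\<gamma>"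
    by blast
  then obtain M where "M \<in> C" "\<beta> \<in> M" "\<gamma> \<in> M"
    using chainsD[OF C, of M\<beta> M\<gamma>] by blast
  then show "f \<beta> < \<gamma>"
    using chainsD2[OF C] \<open>\<beta> < \<gamma>\<close> unfolding separated_def by blast
qed

lemma separated_insert:
  assumes "separated f M" and z: "\<forall>x\<in>M \<union> f ` M. x < z"
  shows "separated f (insert z M)"
  unfolding separated_def
proof (intro ballI impI)
  fix \<beta> \<gamma> assume \<beta>: "\<beta> \<in> insert z M" and \<gamma>: "\<gamma> \<in> insert z M" and "\<beta> < \<gamma>"
  have "\<beta> \<noteq> z"
    using \<gamma> z \<open>\<beta> < \<gamma>\<close> by (auto dest: order.asym)
  then have "\<beta> \<in> M"
    using \<beta> by blast
  show "f \<beta> < \<gamma>"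
  proof (cases "\<gamma> = z")
    case True
    then show ?thesis
      using z \<open>\<beta> \<in> M\<close> by simp
  next
    case False
    then show ?thesis
      using \<gamma> \<open>\<beta> < \<gamma>\<close> \<open>\<beta> \<in> M\<close> assms(1) unfolding separated_def by simp
  qed
qed

lemma omega1_separated_subset:
  fixes f :: "'a::wellorder \<Rightarrow> 'a"
  assumes "omega1_type TYPE('a)"
  obtains M where "uncountable M" and "separated f M"
proof -
  have "\<forall>C\<in>chains {M. separated f M}. \<Union>C \<in> {M. separated f M}"
    by (simp add: separated_chain_Union)
  then obtain M where "M \<in> {M. separated f M}"
    and maximal: "\<forall>M'\<in>{M. separated f M}. M \<subseteq> M' \<longrightarrow> M' = M"
    using Zorn_Lemma by blast
  then have M: "separated f M"
    by simp
  have "uncountable M"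
  proof
    assume "countable M"
    then have "countable (M \<union> f ` M)"
      by simp
    then obtain z where z: "\<forall>x\<in>M \<union> f ` M. x < z"
      by (rule omega1_countable_bounded[OF assms])
    have "insert z M \<in> {M. separated f M}"
      using separated_insert[OF M z] by simp
    then have "insert z M = M"
      by (rule mp[OF bspec[OF maximal] subset_insertI])
    then show False
      using z by auto
  qed
  then show thesis
    using that M by simp
qed

section \<open>Forcing with sets ordered by reverse inclusion\<close>

abbreviation stronger :: "'a set \<Rightarrow> 'a set \<Rightarrow> bool" where
  "stronger p q \<equiv> q \<subseteq> p"

abbreviation union_name :: "'a set set \<Rightarrow> 'a set \<Rightarrow> 'a \<Rightarrow> bool" where
  "union_name P p x \<equiv> p \<in> P \<and> x \<in> p"

lemma is_ccc_cone:
  assumes "is_ccc P stronger"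
  shows "is_ccc {p\<in>P. p0 \<subseteq> p} stronger"
  unfolding is_ccc_def
proof (intro allI impI)
  fix A assume A: "A \<subseteq> {p\<in>P. p0 \<subseteq> p}"
    and antichain: "\<forall>p\<in>A. \<forall>q\<in>A. p \<noteq> q \<longrightarrow> \<not> compatible {p\<in>P. p0 \<subseteq> p} stronger p q"
  have "\<not> compatible P stronger p q" if "p \<in> A" "q \<in> A" "p \<noteq> q" for p q
  proof
    assume "compatible P stronger p q"
    then have "compatible {p\<in>P. p0 \<subseteq> p} stronger p q"
      using A \<open>p \<in> A\<close> unfolding compatible_def by blast
    then show False
      using antichain that by blast
  qed
  moreover have "A \<subseteq> P"
    using A by blast
  ultimately show "countable A"
    using assms unfolding is_ccc_def by simp
qed

lemma not_ccc_if_extensions_bounded: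
  fixes P :: "'a::wellorder set set"
  assumes "omega1_type TYPE('a)" and d: "\<And>b. d b \<in> P" "\<And>b. b \<in> d b"
    and bound: "\<And>b q \<beta>. q \<in> P \<Longrightarrow> d b \<subseteq> q \<Longrightarrow> \<beta> \<in> q \<Longrightarrow> \<beta> \<le> f b"
  shows "\<not> is_ccc P stronger"
proof
  assume ccc: "is_ccc P stronger"
  obtain M where "uncountable M" and M: "separated f M"
    by (rule omega1_separated_subset[OF assms(1)])
  have incompatible: "\<not> compatible P stronger (d \<beta>) (d \<gamma>)"
    if "\<beta> \<in> M" "\<gamma> \<in> M" "\<beta> \<noteq> \<gamma>" for \<beta> \<gamma>
  proof
    assume "compatible P stronger (d \<beta>) (d \<gamma>)"
    then obtain s where "s \<in> P" "d \<beta> \<subseteq> s" "d \<gamma> \<subseteq> s"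
      unfolding compatible_def by blast
    then have "\<gamma> \<le> f \<beta>" "\<beta> \<le> f \<gamma>"
      using bound d(2) by blast+
    then show False
      using M that unfolding separated_def by (meson linorder_neqE not_le)
  qed
  have inj: "inj_on d M"
  proof (rule inj_onI, rule ccontr)
    fix \<beta> \<gamma> assume "\<beta> \<in> M" "\<gamma> \<in> M" "d \<beta> = d \<gamma>" "\<beta> \<noteq> \<gamma>"
    then show False
      using incompatible[of \<beta> \<gamma>] d(1) unfolding compatible_def by auto
  qed
  have "\<not> compatible P stronger p q" if "p \<in> d ` M" "q \<in> d ` M" "p \<noteq> q" for p q
    using that incompatible by auto
  then have "countable (d ` M)"
    using ccc d(1) unfolding is_ccc_def by (simp add: image_subset_iff)
  then show False
    using countable_image_inj_on[OF _ inj] \<open>uncountable M\<close> by simp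
qed

lemma ccc_unbounded_cone:
  fixes P :: "'a::wellorder set set"
  assumes "omega1_type TYPE('a)" and "is_ccc P stronger" and "\<forall>b. \<exists>p\<in>P. b \<in> p"
  shows "\<exists>p0\<in>P. \<forall>p\<in>P. p0 \<subseteq> p \<longrightarrow> (\<forall>\<alpha>. \<exists>q\<in>P. p \<subseteq> q \<and> (\<exists>\<beta>\<in>q. \<alpha> < \<beta>))"
proof (rule ccontr)
  assume "\<not> ?thesis"
  then have no_cone: "\<forall>p0\<in>P. \<exists>p\<in>P. p0 \<subseteq> p \<and> (\<exists>\<alpha>. \<forall>q\<in>P. p \<subseteq> q \<longrightarrow> (\<forall>\<beta>\<in>q. \<beta> \<le> \<alpha>))"
    by (auto simp: not_less)
  have "\<exists>p \<alpha>. p \<in> P \<and> b \<in> p \<and> (\<forall>q\<in>P. p \<subseteq> q \<longrightarrow> (\<forall>\<beta>\<in>q. \<beta> \<le> \<alpha>))" for b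
  proof -
    obtain p0 where "p0 \<in> P" "b \<in> p0"
      using assms(3) by blast
    moreover obtain p \<alpha> where "p \<in> P" "p0 \<subseteq> p"
      "\<forall>q\<in>P. p \<subseteq> q \<longrightarrow> (\<forall>\<beta>\<in>q. \<beta> \<le> \<alpha>)"
      using bspec[OF no_cone \<open>p0 \<in> P\<close>] by auto
    ultimately show ?thesis
      by blast
  qed
  then obtain d f where d: "\<And>b. d b \<in> P" "\<And>b. b \<in> d b"
    and bound: "\<And>b q \<beta>. q \<in> P \<Longrightarrow> d b \<subseteq> q \<Longrightarrow> \<beta> \<in> q \<Longrightarrow> \<beta> \<le> f b"
    by metis
  then show False
    using not_ccc_if_extensions_bounded[OF assms(1) d bound] assms(2) by simp
qed

lemma forces_mem_union_name:
  "forces_mem P stronger (union_name P) q x \<longleftrightarrow>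
     q \<in> P \<and> (\<forall>s\<in>P. q \<subseteq> s \<longrightarrow> (\<exists>t\<in>P. s \<subseteq> t \<and> x \<in> t))"
  unfolding forces_mem_def by blast

lemma forces_mem_finite_extension:
  assumes "finite X" and "q \<in> P"
    and "\<forall>x\<in>X. forces_mem P stronger (union_name P) q x"
  shows "\<exists>t\<in>P. q \<subseteq> t \<and> X \<subseteq> t"
  using assms
proof (induction X rule: finite_induct)
  case empty
  then show ?case by blast
next
  case (insert x X)
  then obtain t where "t \<in> P" "q \<subseteq> t" "X \<subseteq> t"
    by blast
  moreover have "\<forall>s\<in>P. q \<subseteq> s \<longrightarrow> (\<exists>t\<in>P. s \<subseteq> t \<and> x \<in> t)"
    using insert.prems unfolding forces_mem_union_name by blast
  ultimately obtain t' where "t' \<in> P" "t \<subseteq> t'" "x \<in> t'"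
    by blast
  with \<open>q \<subseteq> t\<close> \<open>X \<subseteq> t\<close> show ?case
    by blast
qed

lemma forces_mem_union_name_member: "q \<in> P \<Longrightarrow> x \<in> q \<Longrightarrow> forces_mem P stronger (union_name P) q x"
  unfolding forces_mem_union_name by blast

lemma forces_unbounded_union_name:
  assumes "\<forall>p\<in>P. \<forall>\<alpha>. \<exists>q\<in>P. p \<subseteq> q \<and> (\<exists>\<beta>\<in>q. \<alpha> < \<beta>)"
  shows "forces_unbounded P stronger (union_name P)"
  unfolding forces_unbounded_def
proof (intro allI ballI)
  fix \<alpha> p assume "p \<in> P"
  then obtain q \<beta> where q: "q \<in> P" "p \<subseteq> q" and \<beta>: "\<beta> \<in> q" "\<alpha> < \<beta>"
    using assms by blast
  then show "\<exists>q\<in>P. p \<subseteq> q \<and> (\<exists>\<beta>>\<alpha>. forces_mem P stronger (union_name P) q \<beta>)"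
    using forces_mem_union_name_member[OF q(1) \<beta>(1)] by blast
qed

lemma forces_injective_union_name:
  assumes "\<forall>p\<in>P. injective_set c p"
  shows "forces_injective P stronger (union_name P) c"
  unfolding forces_injective_def
proof (intro ballI impI notI)
  fix e e' assume e: "e \<in> pairs UNIV" "e' \<in> pairs UNIV" "e \<noteq> e'" "c e = c e'"
    and "\<exists>q\<in>P. \<forall>\<gamma>\<in>e \<union> e'. forces_mem P stronger (union_name P) q \<gamma>"
  moreover have "finite (e \<union> e')"
    using e(1,2) unfolding pairs_def by (simp add: card_ge_0_finite)
  ultimately obtain t where "t \<in> P" "e \<union> e' \<subseteq> t"
    using forces_mem_finite_extension[of "e \<union> e'" _ P] by blast
  then have "e \<in> pairs t" "e' \<in> pairs t" "inj_on c (pairs t)"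
    using e(1,2) assms unfolding pairs_def injective_set_def by auto
  then show False
    using e(3,4) by (meson inj_onD)
qed

lemma ccc_destructibleI:
  fixes c :: "'a::wellorder set \<Rightarrow> 'a" and P :: "'a set set"
  assumes "omega1_type TYPE('a)" and "\<forall>p\<in>P. injective_set c p"
    and "is_ccc P stronger" and "\<forall>b. \<exists>p\<in>P. b \<in> p"
  shows "ccc_destructible c"
proof -
  obtain p0 where "p0 \<in> P"
    and unbounded: "\<forall>p\<in>P. p0 \<subseteq> p \<longrightarrow> (\<forall>\<alpha>. \<exists>q\<in>P. p \<subseteq> q \<and> (\<exists>\<beta>\<in>q. \<alpha> < \<beta>))"
    using ccc_unbounded_cone[OF assms(1,3,4)] by blast
  define Q where "Q = {p\<in>P. p0 \<subseteq> p}"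
  have "\<forall>p\<in>Q. \<forall>\<alpha>. \<exists>q\<in>Q. p \<subseteq> q \<and> (\<exists>\<beta>\<in>q. \<alpha> < \<beta>)"
  proof (intro ballI allI)
    fix p \<alpha> assume p: "p \<in> Q"
    then have "p \<in> P" "p0 \<subseteq> p"
      unfolding Q_def by auto
    then have "\<forall>\<alpha>. \<exists>q\<in>P. p \<subseteq> q \<and> (\<exists>\<beta>\<in>q. \<alpha> < \<beta>)"
      using unbounded by blast
    then obtain q where "q \<in> P" "p \<subseteq> q" "\<exists>\<beta>\<in>q. \<alpha> < \<beta>"
      by blast
    moreover from this have "q \<in> Q"
      using p unfolding Q_def by blast
    ultimately show "\<exists>q\<in>Q. p \<subseteq> q \<and> (\<exists>\<beta>\<in>q. \<alpha> < \<beta>)"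
      by blast
  qed
  then have "forces_unbounded Q stronger (union_name Q)"
    by (rule forces_unbounded_union_name)
  moreover have "forces_injective Q stronger (union_name Q) c"
    using assms(2) unfolding Q_def by (intro forces_injective_union_name) simp
  moreover have "Q \<noteq> {}" "partial_order_on' Q stronger" "is_ccc Q stronger"
    using \<open>p0 \<in> P\<close> is_ccc_cone[OF assms(3)] unfolding Q_def partial_order_on'_def by auto
  ultimately show ?thesis
    unfolding ccc_destructible_def
    by (intro exI[of _ Q] exI[of _ stronger] conjI exI[of _ "union_name Q"])
      simp_all
qed

locale scheme =
  fixes FF :: "'a::linorder set set" and m n r :: "nat \<Rightarrow> nat"
  assumes construction_scheme: "construction_scheme FF m n r"
    and is_type: "is_type m n r"
begin

text \<open>For \<open>F\<close> of rank \<open>k + 1\<close>, \<open>block k F i\<close> and \<open>rt k F\<close> are the paper's \<open>F\<^sub>i\<close> and \<open>R(F)\<close>.\<close>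

abbreviation block :: "nat \<Rightarrow> 'a set \<Rightarrow> nat \<Rightarrow> 'a set" where
  "block k F i \<equiv> blocks FF n r k F ! i"

abbreviation rt :: "nat \<Rightarrow> 'a set \<Rightarrow> 'a set" where
  "rt k F \<equiv> root FF n r k F"

lemma r_Suc_less_m: "r (Suc k) < m k"
  using is_type unfolding is_type_def by blast

lemma level_finite: "F \<in> level FF k \<Longrightarrow> finite F"
  using construction_scheme unfolding construction_scheme_def level_def by blast

lemma level_card: "F \<in> level FF k \<Longrightarrow> card F = m k"
  using construction_scheme unfolding construction_scheme_def by blast

lemma level_coherent:
  assumes "E \<in> level FF k" "F \<in> level FF k" "y \<in> E" "y \<in> F" "x \<in> E" "x < y"
  shows "x \<in> F"
proof -
  have "seg_le (E \<inter> F) E"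
    using construction_scheme assms(1,2) unfolding construction_scheme_def by blast
  then show ?thesis
    using assms(3-6) unfolding seg_le_def by blast
qed

lemma pos_level_eq:
  assumes "E \<in> level FF k" "F \<in> level FF k" "y \<in> E" "y \<in> F"
  shows "pos E y = pos F y"
proof -
  have "{x\<in>E. x < y} = {x\<in>F. x < y}"
    using level_coherent[OF assms] level_coherent[OF assms(2,1,4,3)] by blast
  then show ?thesis
    unfolding pos_def by simp
qed

lemma decomposition_unique: "F \<in> level FF (Suc k) \<Longrightarrow> \<exists>!Fs. \<exists>R. is_decomp FF n r k F Fs R"
  using construction_scheme unfolding construction_scheme_def by (elim conjE) (simp only: Ball_def)

lemma is_decomp_blocks:
  assumes "F \<in> level FF (Suc k)"
  shows "is_decomp FF n r k F (blocks FF n r k F) (rt k F)"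
proof -
  let ?Fs = "blocks FF n r k F"
  obtain R where R: "is_decomp FF n r k F ?Fs R"
    using theI'[OF decomposition_unique[OF assms]] unfolding blocks_def by blast
  have "2 \<le> n (Suc k)"
    using is_type unfolding is_type_def by simp
  then have "R' = ?Fs ! 0 \<inter> ?Fs ! 1" if "is_decomp FF n r k F ?Fs R'" for R'
    using that unfolding is_decomp_def by simp
  then have "rt k F = R"
    unfolding root_def using R by (intro the_equality) auto
  then show ?thesis
    using R by simp
qed

context
  fixes k F assumes F: "F \<in> level FF (Suc k)"
begin

lemma length_blocks: "length (blocks FF n r k F) = n (Suc k)"
  using is_decomp_blocks[OF F] unfolding is_decomp_def by simp

lemma block_level: "i < n (Suc k) \<Longrightarrow> block k F i \<in> level FF k"
proof -
  assume "i < n (Suc k)"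
  moreover have "set (blocks FF n r k F) \<subseteq> level FF k"
    using is_decomp_blocks[OF F] unfolding is_decomp_def by simp
  ultimately show ?thesis
    using nth_mem[of i "blocks FF n r k F"] length_blocks by auto
qed

lemma blocks_Union: "F = (\<Union>i<n (Suc k). block k F i)"
proof -
  have "F = \<Union>(set (blocks FF n r k F))"
    using is_decomp_blocks[OF F] unfolding is_decomp_def by simp
  also have "set (blocks FF n r k F) = (!) (blocks FF n r k F) ` {..<n (Suc k)}"
    using nth_image[of "n (Suc k)" "blocks FF n r k F"] length_blocks
    by (simp add: atLeast0LessThan)
  finally show ?thesis .
qed

lemma block_subset: "i < n (Suc k) \<Longrightarrow> block k F i \<subseteq> F"
  using blocks_Union by auto

lemma block_inter:
  assumes "i < n (Suc k)" "j < n (Suc k)" "i \<noteq> j"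
  shows "block k F i \<inter> block k F j = rt k F"
proof -
  have inter: "\<forall>i j. i < j \<longrightarrow> j < n (Suc k) \<longrightarrow> block k F i \<inter> block k F j = rt k F"
    using is_decomp_blocks[OF F] length_blocks unfolding is_decomp_def by simp
  consider "i < j" | "j < i"
    using assms(3) by linarith
  then show ?thesis
    using inter assms(1,2) by cases (simp, simp add: Int_commute[of "block k F i"])
qed

lemma root_subset_block:
  assumes "i < n (Suc k)"
  shows "rt k F \<subseteq> block k F i"
proof -
  define j where "j = (if i = 0 then 1 else 0 :: nat)"
  have "2 \<le> n (Suc k)"
    using is_type unfolding is_type_def by simp
  then have "j < n (Suc k)" "j \<noteq> i"
    unfolding j_def by auto
  then show ?thesis
    using block_inter[OF assms] by (metis Int_lower1)
qed

lemma card_root: "card (rt k F) = r (Suc k)"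
  using is_decomp_blocks[OF F] unfolding is_decomp_def by simp

lemma card_block_diff_root:
  assumes "i < n (Suc k)"
  shows "card (block k F i - rt k F) = m k - r (Suc k)"
proof -
  have "finite (block k F i)" "card (block k F i) = m k"
    using block_level[OF assms] level_finite level_card by auto
  then show ?thesis
    using root_subset_block[OF assms] card_root
    by (simp add: card_Diff_subset finite_subset)
qed

lemma block_diff_root_nonempty: "i < n (Suc k) \<Longrightarrow> block k F i - rt k F \<noteq> {}"
  using card_block_diff_root[of i] r_Suc_less_m[of k] by (metis card.empty zero_less_diff less_irrefl)

lemma block_less_Suc:
  "Suc i < n (Suc k) \<Longrightarrow> set_less (block k F i - rt k F) (block k F (Suc i) - rt k F)"
  using is_decomp_blocks[OF F] length_blocks unfolding is_decomp_def by simp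

lemma root_less_block: "i < n (Suc k) \<Longrightarrow> set_less (rt k F) (block k F i - rt k F)"
proof (induction i)
  case 0
  then show ?case
    using is_decomp_blocks[OF F] unfolding is_decomp_def by simp
next
  case (Suc i)
  then have "set_less (rt k F) (block k F i - rt k F)"
    by simp
  then show ?case
    using block_less_Suc[OF Suc.prems] block_diff_root_nonempty[of i] Suc.prems
    by (auto intro: set_less_trans)
qed

lemma block_less_block:
  "i < j \<Longrightarrow> j < n (Suc k) \<Longrightarrow> set_less (block k F i - rt k F) (block k F j - rt k F)"
proof (induction j)
  case 0
  then show ?case by simp
next
  case (Suc j)
  show ?case
  proof (cases "i = j")
    case True
    then show ?thesis
      using block_less_Suc Suc.prems by simp
  next
    case False
    then have "set_less (block k F i - rt k F) (block k F j - rt k F)"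
      using Suc by simp
    then show ?thesis
      using block_less_Suc[of j] block_diff_root_nonempty[of j] Suc.prems
      by (auto intro: set_less_trans)
  qed
qed

lemma pos_block_root: "i < n (Suc k) \<Longrightarrow> x \<in> rt k F \<Longrightarrow> pos (block k F i) x = pos (rt k F) x"
  using pos_initial_segment[OF root_subset_block root_less_block] .

lemma card_root_le_pos_block:
  "i < n (Suc k) \<Longrightarrow> x \<in> block k F i - rt k F \<Longrightarrow> r (Suc k) \<le> pos (block k F i) x"
  using card_initial_segment_le_pos[OF root_subset_block root_less_block]
    block_level[THEN level_finite] card_root by simp

lemma block_disjoint_block_diff_root:
  "i < n (Suc k) \<Longrightarrow> j < n (Suc k) \<Longrightarrow> i \<noteq> j \<Longrightarrow> block k F i \<inter> (block k F j - rt k F) = {}"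
  using block_inter by blast

lemma initial_segment_level_Suc:
  assumes i: "i < n (Suc k)" and x: "x \<in> block k F i - rt k F"
  shows "{y\<in>F. y < x} = {y\<in>block k F i. y < x} \<union> (\<Union>j<i. block k F j - rt k F)"
proof (intro equalityI subsetI)
  fix y assume y: "y \<in> {y\<in>F. y < x}"
  then obtain j where j: "j < n (Suc k)" "y \<in> block k F j"
    using blocks_Union by auto
  have "\<not> (i < j \<and> y \<notin> rt k F)"
    using block_less_block[OF _ j(1)] x j(2) y unfolding set_less_def by (auto dest: less_asym)
  then show "y \<in> {y\<in>block k F i. y < x} \<union> (\<Union>j<i. block k F j - rt k F)"
    using y j root_subset_block[OF i] by (cases j i rule: linorder_cases) auto
next
  fix y assume "y \<in> {y\<in>block k F i. y < x} \<union> (\<Union>j<i. block k F j - rt k F)"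
  then show "y \<in> {y\<in>F. y < x}"
  proof
    assume "y \<in> {y\<in>block k F i. y < x}"
    then show ?thesis
      using block_subset[OF i] by blast
  next
    assume "y \<in> (\<Union>j<i. block k F j - rt k F)"
    then obtain j where j: "j < i" "y \<in> block k F j - rt k F"
      by blast
    then have "y < x"
      using block_less_block[OF j(1) i] x unfolding set_less_def by blast
    then show ?thesis
      using block_subset[of j] i j by auto
  qed
qed

lemma card_Union_blocks_diff_root:
  assumes "i \<le> n (Suc k)"
  shows "card (\<Union>j<i. block k F j - rt k F) = i * (m k - r (Suc k))"
proof -
  have "card (\<Union>j<i. block k F j - rt k F) = (\<Sum>j<i. card (block k F j - rt k F))"
  proof (rule card_UN_disjoint)
    show "\<forall>j\<in>{..<i}. finite (block k F j - rt k F)"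
      using assms block_level[THEN level_finite] by simp
    show "\<forall>j\<in>{..<i}. \<forall>j'\<in>{..<i}. j \<noteq> j' \<longrightarrow>
        (block k F j - rt k F) \<inter> (block k F j' - rt k F) = {}"
    proof (intro ballI impI)
      fix j j' assume "j \<in> {..<i}" "j' \<in> {..<i}" "j \<noteq> j'"
      then show "(block k F j - rt k F) \<inter> (block k F j' - rt k F) = {}"
        using block_disjoint_block_diff_root[of j j'] assms by auto
    qed
  qed simp
  then show ?thesis
    using assms card_block_diff_root by simp
qed

lemma pos_level_Suc:
  assumes i: "i < n (Suc k)" and x: "x \<in> block k F i - rt k F"
  shows "pos F x = pos (block k F i) x + i * (m k - r (Suc k))"
proof -
  have "block k F i \<inter> (block k F j - rt k F) = {}" if "j < i" for j
    using block_disjoint_block_diff_root[of i j] i that by simp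
  then have "{y\<in>block k F i. y < x} \<inter> (\<Union>j<i. block k F j - rt k F) = {}"
    by blast
  moreover have "finite (block k F i)" "finite (\<Union>j<i. block k F j - rt k F)"
    using i block_level[THEN level_finite] by auto
  ultimately show ?thesis
    unfolding pos_def initial_segment_level_Suc[OF assms]
    using card_Union_blocks_diff_root i by (simp add: card_Un_disjoint)
qed

lemma
  assumes "i < n (Suc k)" "j < n (Suc k)" "x \<in> block k F i"
  shows inc_map_block_mem: "inc_map (block k F i) (block k F j) x \<in> block k F j"
    and pos_inc_map_block: "pos (block k F j) (inc_map (block k F i) (block k F j) x) = pos (block k F i) x"
  using inc_map_mem pos_inc_map assms block_level level_finite level_card by metis+

lemma inc_map_root:
  assumes "i < n (Suc k)" "j < n (Suc k)" "x \<in> rt k F"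
  shows "inc_map (block k F i) (block k F j) x = x"
proof -
  have "x \<in> block k F i" "x \<in> block k F j"
    using assms root_subset_block by auto
  moreover have "pos (block k F j) (inc_map (block k F i) (block k F j) x) = pos (block k F j) x"
    using pos_inc_map_block assms \<open>x \<in> block k F i\<close> pos_block_root by simp
  ultimately show ?thesis
    using inj_on_pos[OF block_level[THEN level_finite]] inc_map_block_mem assms
    by (meson inj_onD)
qed

lemma inc_map_block_diff_root:
  assumes "i < n (Suc k)" "j < n (Suc k)" "x \<in> block k F i - rt k F"
  shows "inc_map (block k F i) (block k F j) x \<in> block k F j - rt k F"
proof -
  let ?y = "inc_map (block k F i) (block k F j) x"
  have "r (Suc k) \<le> pos (block k F j) ?y"
    using pos_inc_map_block card_root_le_pos_block assms by simp
  moreover have "pos (block k F j) ?y < r (Suc k)" if "?y \<in> rt k F"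
    using that pos_block_root[OF assms(2)] pos_less_card block_level[THEN level_finite]
      root_subset_block card_root assms(2)
    by (metis finite_subset)
  ultimately show ?thesis
    using inc_map_block_mem assms by auto
qed

lemma copy_diff_subset:
  assumes "i < n (Suc k)" "j < n (Suc k)" "c \<subseteq> block k F i"
  shows "inc_map (block k F i) (block k F j) ` c - c \<subseteq> block k F j - rt k F"
proof
  fix y assume y: "y \<in> inc_map (block k F i) (block k F j) ` c - c"
  then obtain z where z: "z \<in> c" "y = inc_map (block k F i) (block k F j) z"
    by blast
  then have "z \<notin> rt k F"
    using inc_map_root[OF assms(1,2)] y by auto
  then show "y \<in> block k F j - rt k F"
    using inc_map_block_diff_root[OF assms(1,2), of z] z assms(3) by auto
qed

lemma diff_copy_subset:
  assumes "i < n (Suc k)" "j < n (Suc k)" "c \<subseteq> block k F i"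
  shows "c - inc_map (block k F i) (block k F j) ` c \<subseteq> block k F i - rt k F"
proof
  fix x assume x: "x \<in> c - inc_map (block k F i) (block k F j) ` c"
  have "x \<notin> rt k F"
  proof
    assume "x \<in> rt k F"
    then have "x \<in> inc_map (block k F i) (block k F j) ` c"
      using x inc_map_root[OF assms(1,2)] by (metis DiffD1 image_eqI)
    with x show False
      by simp
  qed
  then show "x \<in> block k F i - rt k F"
    using x assms(3) by auto
qed

end

lemma level_descent:
  assumes "F \<in> level FF L" "y \<in> F" "k \<le> L"
  shows "\<exists>E\<in>level FF k. y \<in> E \<and> E \<subseteq> F"
  using assms
proof (induction L arbitrary: F)
  case 0
  then show ?case by auto
next
  case (Suc L)
  show ?case
  proof (cases "k = Suc L")
    case True
    then show ?thesis
      using Suc.prems by auto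
  next
    case False
    obtain i where i: "i < n (Suc L)" "y \<in> block L F i"
      using blocks_Union[OF Suc.prems(1)] Suc.prems(2) by auto
    then obtain E where "E \<in> level FF k" "y \<in> E" "E \<subseteq> block L F i"
      using Suc.IH[OF block_level[OF Suc.prems(1) i(1)]] Suc.prems(3) False by auto
    then show ?thesis
      using block_subset[OF Suc.prems(1) i(1)] by auto
  qed
qed

lemma blocks_separated:
  assumes F: "F \<in> level FF (Suc L)" and ij: "i < n (Suc L)" "j < n (Suc L)" "i \<noteq> j"
    and x: "x \<in> block L F i - rt L F" and y: "y \<in> block L F j - rt L F"
    and E: "E \<in> level FF k" "k \<le> L" "x \<in> E" "y \<in> E"
  shows False
proof -
  have False if ab: "a \<in> block L F i' - rt L F" "b \<in> block L F j' - rt L F"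
    "i' < n (Suc L)" "j' < n (Suc L)" "i' \<noteq> j'" "a < b" "a \<in> E" "b \<in> E" for a b i' j'
  proof -
    obtain E' where E': "E' \<in> level FF k" "b \<in> E'" "E' \<subseteq> block L F j'"
      using level_descent[OF block_level[OF F ab(4)] _ E(2)] ab(2) by blast
    then have "a \<in> block L F j'"
      using level_coherent[OF E(1) E'(1) ab(8) E'(2) ab(7,6)] by blast
    then show False
      using block_inter[OF F ab(3-5)] ab(1) by blast
  qed
  moreover have "x \<noteq> y"
    using x y block_inter[OF F ij] by blast
  ultimately show False
    using x y ij E by (metis linorder_neqE)
qed

end

section \<open>Aligned triples in schemes with three blocks\<close>

definition legs :: "'a \<times> 'a \<times> 'a \<Rightarrow> 'a set set" where
  "legs t = (case t of (x0, x1, x2) \<Rightarrow> {{x0, x2}, {x1, x2}})"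

locale scheme3 = scheme FF m "\<lambda>_. 3" r for FF :: "'a::linorder set set" and m r
begin

definition aligned :: "nat \<Rightarrow> 'a set \<Rightarrow> 'a \<Rightarrow> 'a \<Rightarrow> 'a \<Rightarrow> bool" where
  "aligned k G x0 x1 x2 \<longleftrightarrow> G \<in> level FF (Suc k) \<and> x0 \<in> block k G 0 - rt k G \<and>
     x1 = inc_map (block k G 0) (block k G 1) x0 \<and> x2 = inc_map (block k G 0) (block k G 2) x0"

definition triples :: "('a \<times> 'a \<times> 'a) set" where
  "triples = {(x0, x1, x2). \<exists>k G. aligned k G x0 x1 x2}"

lemma aligned_blocks:
  assumes "aligned k G x0 x1 x2"
  shows "G \<in> level FF (Suc k)" "x0 \<in> block k G 0 - rt k G"
    "x1 \<in> block k G 1 - rt k G" "x2 \<in> block k G 2 - rt k G"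
  using assms inc_map_block_diff_root unfolding aligned_def by auto

lemma aligned_mem:
  assumes "aligned k G x0 x1 x2"
  shows "x0 \<in> G" "x1 \<in> G" "x2 \<in> G"
  using aligned_blocks[OF assms] block_subset[OF aligned_blocks(1)[OF assms], of 0]
    block_subset[OF aligned_blocks(1)[OF assms], of 1] block_subset[OF aligned_blocks(1)[OF assms], of 2]
  by auto

lemma aligned_less:
  assumes "aligned k G x0 x1 x2"
  shows "x0 < x1" "x1 < x2" "x0 < x2"
  using aligned_blocks[OF assms] block_less_block[OF aligned_blocks(1)[OF assms], of 0 1]
    block_less_block[OF aligned_blocks(1)[OF assms], of 1 2]
  unfolding set_less_def by (auto intro: less_trans)

lemma aligned_pos:
  assumes "aligned k G x0 x1 x2"
  shows "pos G x0 + 2 * (m k - r (Suc k)) = pos G x2"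
    and "pos G x1 + (m k - r (Suc k)) = pos G x2"
proof -
  note G = aligned_blocks(1)[OF assms]
  have "pos (block k G 1) x1 = pos (block k G 0) x0" "pos (block k G 2) x2 = pos (block k G 0) x0"
    using assms pos_inc_map_block[OF G] unfolding aligned_def by auto
  then show "pos G x0 + 2 * (m k - r (Suc k)) = pos G x2"
    and "pos G x1 + (m k - r (Suc k)) = pos G x2"
    using pos_level_Suc[OF G, of 0 x0] pos_level_Suc[OF G, of 1 x1] pos_level_Suc[OF G, of 2 x2]
      aligned_blocks[OF assms] by simp_all
qed

lemma aligned_leg_separated:
  assumes "aligned k G x0 x1 x2" "a \<in> {x0, x1}" "E \<in> level FF j" "j \<le> k" "a \<in> E" "x2 \<in> E"
  shows False
proof -
  obtain i :: nat where "i < 2" "a \<in> block k G i - rt k G"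
  proof (cases "a = x0")
    case True
    then show thesis
      using that[of 0] aligned_blocks[OF assms(1)] by simp
  next
    case False
    then show thesis
      using that[of 1] aligned_blocks[OF assms(1)] assms(2) by simp
  qed
  then show False
    using blocks_separated[OF aligned_blocks(1)[OF assms(1)], of i 2 a x2] aligned_blocks[OF assms(1)]
      assms(3-6) by simp
qed

lemma aligned_level_unique:
  assumes "aligned k G x0 x1 x2" "aligned k' G' y0 y1 y2" "a \<in> {x0, x1}" "a \<in> {y0, y1}" "x2 = y2"
  shows "k = k'"
proof -
  have False if "aligned k G x0 x1 x2" "aligned k' G' y0 y1 y2" "a \<in> {x0, x1}" "a \<in> {y0, y1}"
    "x2 = y2" "k < k'" for k G x0 x1 x2 k' G' y0 y1 y2
    using aligned_leg_separated[OF that(2,4) aligned_blocks(1)[OF that(1)]] aligned_mem[OF that(1)]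
      that(3,5,6) by auto
  then show ?thesis
    using assms by (metis linorder_neqE_nat)
qed

lemma aligned_unique_same_level:
  assumes "aligned k G x0 x1 x2" "aligned k G' y0 y1 y2" "x2 = y2"
  shows "x0 = y0 \<and> x1 = y1"
proof -
  note G = aligned_blocks(1)[OF assms(1)] and G' = aligned_blocks(1)[OF assms(2)]
  have x2: "x2 \<in> G" "x2 \<in> G'"
    using aligned_mem assms by auto
  have "x0 \<in> G'" "x1 \<in> G'"
    using level_coherent[OF G G' x2] aligned_mem[OF assms(1)] aligned_less[OF assms(1)] by auto
  moreover have "pos G' x0 = pos G x0" "pos G' x1 = pos G x1"
    using pos_level_eq[OF G' G] calculation aligned_mem[OF assms(1)] by auto
  moreover have "pos G x2 = pos G' y2"
    using pos_level_eq[OF G G' x2] assms(3) by simp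
  ultimately have "pos G' x0 = pos G' y0" "pos G' x1 = pos G' y1"
    using aligned_pos[OF assms(1)] aligned_pos[OF assms(2)] by simp_all
  then show ?thesis
    using inj_on_pos[OF level_finite[OF G']] \<open>x0 \<in> G'\<close> \<open>x1 \<in> G'\<close> aligned_mem[OF assms(2)]
    by (meson inj_onD)
qed

lemma triples_leg_unique:
  assumes "t \<in> triples" "t' \<in> triples" "e \<in> legs t" "e \<in> legs t'"
  shows "t = t'"
proof -
  obtain x0 x1 x2 k G where t: "t = (x0, x1, x2)" and al: "aligned k G x0 x1 x2"
    using assms(1) unfolding triples_def by auto
  obtain y0 y1 y2 k' G' where t': "t' = (y0, y1, y2)" and al': "aligned k' G' y0 y1 y2"
    using assms(2) unfolding triples_def by auto
  obtain a where a: "a \<in> {x0, x1}" "a < x2" "e = {a, x2}"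
    using assms(3) aligned_less[OF al] unfolding t legs_def by auto
  obtain b where b: "b \<in> {y0, y1}" "b < y2" "e = {b, y2}"
    using assms(4) aligned_less[OF al'] unfolding t' legs_def by auto
  have "a = b" "x2 = y2"
    using a b by (auto simp: doubleton_eq_iff dest: order.asym)
  moreover from this have "k = k'"
    using aligned_level_unique[OF al al'] a b by simp
  ultimately show ?thesis
    using aligned_unique_same_level[OF al] al' t t' by simp
qed


lemma captures_three:
  assumes "captures FF (\<lambda>_. 3) r l F C" and "card C = 3"
  obtains k c0 c1 c2 where "F \<in> level FF (Suc k)" "C = {c0, c1, c2}" "c0 \<noteq> c1"
    "c0 \<subseteq> block k F 0" "c0 - rt k F \<noteq> {}"
    "c1 = inc_map (block k F 0) (block k F 1) ` c0" "c2 = inc_map (block k F 0) (block k F 2) ` c0"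
proof -
  obtain k where k: "l = Suc k"
    using assms(1) unfolding captures_def by (cases l) auto
  obtain cs where cs: "distinct cs" "set cs = C"
    "\<forall>i<length cs. cs ! i \<subseteq> block k F i \<and> cs ! i - rt k F \<noteq> {} \<and>
        inc_map (block k F 0) (block k F i) ` (cs ! 0) = cs ! i"
    using assms(1) k unfolding captures_def Let_def by auto
  have "length cs = 3"
    using distinct_card[OF cs(1)] cs(2) assms(2) by simp
  then obtain c0 c1 c2 where cs_eq: "cs = [c0, c1, c2]"
    by (auto simp: numeral_3_eq_3 length_Suc_conv)
  have "F \<in> level FF (Suc k)"
    using assms(1) k unfolding captures_def by simp
  moreover have "C = {c0, c1, c2}" "c0 \<noteq> c1"
    using cs(1,2) unfolding cs_eq by auto
  moreover have "c0 \<subseteq> block k F 0" "c0 - rt k F \<noteq> {}"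
    using cs(3)[rule_format, of 0] unfolding cs_eq by simp_all
  moreover have "c1 = inc_map (block k F 0) (block k F 1) ` c0"
    using cs(3)[rule_format, of 1] unfolding cs_eq by simp
  moreover have "c2 = inc_map (block k F 0) (block k F 2) ` c0"
    using cs(3)[rule_format, of 2] unfolding cs_eq by simp
  ultimately show thesis
    by (rule that)
qed

lemma aligned_top_not_in_block1:
  assumes F: "F \<in> level FF (Suc k)" and al: "aligned k' G x0 x1 x2" and a: "a \<in> {x0, x1}"
    and a0: "a \<in> block k F 0 - rt k F" and x2: "x2 \<in> block k F 1 - rt k F"
  shows False
proof (cases k' k rule: linorder_cases)
  case less
  then show False
    using blocks_separated[OF F, of 0 1 a x2 G "Suc k'"] aligned_blocks(1)[OF al]
      aligned_mem[OF al] a a0 x2 by auto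
next
  case greater
  then show False
    using aligned_leg_separated[OF al a F] block_subset[OF F, of 0] block_subset[OF F, of 1] a0 x2
    by auto
next
  case equal
  \<comment> \<open>then \<open>x2\<close> has the same position in \<open>G\<close> and in \<open>F\<close>, but the blocks it lies in put it at
     least \<open>r + 2(m - r)\<close> in \<open>G\<close> and below \<open>m + (m - r)\<close> in \<open>F\<close>\<close>
  note G = aligned_blocks(1)[OF al, unfolded equal]
  have "pos G x2 = pos F x2"
    using pos_level_eq[OF G F] aligned_mem[OF al] block_subset[OF F, of 1] x2 by auto
  moreover have "r (Suc k) + 2 * (m k - r (Suc k)) \<le> pos G x2"
    using pos_level_Suc[OF G, of 2 x2] card_root_le_pos_block[OF G, of 2 x2]
      aligned_blocks(4)[OF al] equal by simp
  moreover have "pos F x2 < m k + (m k - r (Suc k))"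
    using pos_level_Suc[OF F, of 1 x2] pos_less_card[of "block k F 1" x2]
      block_level[OF F, of 1, THEN level_finite] block_level[OF F, of 1, THEN level_card] x2 by simp
  ultimately show False
    using r_Suc_less_m[of k] by linarith
qed

lemma aligned_subset_copies:
  assumes F: "F \<in> level FF (Suc k)" and c0: "c0 \<subseteq> block k F 0"
    and c1: "c1 = inc_map (block k F 0) (block k F 1) ` c0"
    and al: "aligned k' G x0 x1 x2" and sub: "{x0, x1, x2} \<subseteq> c0 \<union> c1"
  shows "{x0, x1, x2} \<subseteq> c0 \<or> {x0, x1, x2} \<subseteq> c1"
proof (cases "x2 \<in> c0")
  case True
  have "x \<in> c0" if "x \<in> {x0, x1}" for x
  proof (rule ccontr)
    assume "x \<notin> c0"
    then have "x \<in> block k F 1 - rt k F"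
      using that sub copy_diff_subset[OF F, of 0 1 c0] c0 c1 by auto
    moreover have "x2 \<in> rt k F \<or> x2 \<in> block k F 0 - rt k F"
      using True c0 by auto
    ultimately have "x2 < x"
      using root_less_block[OF F, of 1] block_less_block[OF F, of 0 1] unfolding set_less_def by auto
    then show False
      using aligned_less[OF al] that by auto
  qed
  then show ?thesis
    using True by auto
next
  case False
  then have x2: "x2 \<in> block k F 1 - rt k F"
    using sub copy_diff_subset[OF F, of 0 1 c0] c0 c1 by auto
  have "x \<in> c1" if "x \<in> {x0, x1}" for x
  proof (rule ccontr)
    assume "x \<notin> c1"
    then have "x \<in> block k F 0 - rt k F"
      using that sub diff_copy_subset[OF F, of 0 1 c0] c0 c1 by auto
    then show False
      using aligned_top_not_in_block1[OF F al that _ x2] by simp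
  qed
  then show ?thesis
    using False sub by auto
qed
end

section \<open>The colouring\<close>

lemma ex_inj_triple:
  assumes "infinite (UNIV :: 'a set)"
  obtains J :: "'a \<times> 'a \<times> 'a \<Rightarrow> 'a" where "inj J"
proof -
  obtain h :: "'a \<times> 'a \<Rightarrow> 'a" where h: "inj h"
    using card_of_ordLeq[of "UNIV \<times> UNIV" "UNIV :: 'a set"]
      ordIso_iff_ordLeq[THEN iffD1, OF card_of_Times_same_infinite[OF assms]]
    by auto
  have "inj (\<lambda>(a, b, c). h (a, h (b, c)))"
    unfolding inj_def using h by (auto simp: inj_eq)
  then show thesis
    by (rule that)
qed

lemma card_2_Min_Max:
  assumes "card (e :: 'a::linorder set) = 2"
  shows "e = {Min e, Max e}"
proof -
  obtain x y where "e = {x, y}" "x \<noteq> y"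
    using assms by (auto simp: card_2_iff)
  then show ?thesis
    by (cases "x < y") (auto simp: min_def max_def)
qed

locale scheme3_coloring = scheme3 FF m r for FF :: "'a::linorder set set" and m r +
  fixes J :: "'a \<times> 'a \<times> 'a \<Rightarrow> 'a"
  assumes inj_J: "inj J"
begin

text \<open>A pair that is not a leg is coded by \<open>(Min e, Min e, Max e)\<close>, which is never a triple,
  since triples are strictly increasing.\<close>

definition label :: "'a set \<Rightarrow> 'a \<times> 'a \<times> 'a" where
  "label e = (if \<exists>t\<in>triples. e \<in> legs t then THE t. t \<in> triples \<and> e \<in> legs t
              else (Min e, Min e, Max e))"

definition col :: "'a set \<Rightarrow> 'a" where
  "col e = J (label e)"

lemma label_leg:
  assumes "t \<in> triples" "e \<in> legs t"
  shows "label e = t"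
proof -
  have "(THE t. t \<in> triples \<and> e \<in> legs t) = t"
    using assms triples_leg_unique by (intro the_equality) blast+
  then show ?thesis
    using assms unfolding label_def by auto
qed

lemma label_in_triples_iff: "label e \<in> triples \<longleftrightarrow> (\<exists>t\<in>triples. e \<in> legs t)"
proof
  assume "label e \<in> triples"
  moreover have "(a, a, b) \<notin> triples" for a b
    unfolding triples_def using aligned_less by blast
  ultimately show "\<exists>t\<in>triples. e \<in> legs t"
    unfolding label_def by (metis (lifting))
qed (use label_leg in blast)

lemma label_eq_imp_common_triple:
  assumes "card e = 2" "card e' = 2" "e \<noteq> e'" "label e = label e'"
  shows "\<exists>t\<in>triples. e \<in> legs t \<and> e' \<in> legs t"
proof (cases "label e \<in> triples")
  case True
  then obtain t where t: "t \<in> triples" "e \<in> legs t"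
    using label_in_triples_iff by blast
  moreover have "label e' \<in> triples"
    using True assms(4) by simp
  then obtain t' where t': "t' \<in> triples" "e' \<in> legs t'"
    using label_in_triples_iff by blast
  moreover have "t = t'"
    using label_leg[OF t] label_leg[OF t'] assms(4) by simp
  ultimately show ?thesis
    by blast
next
  case False
  then have "\<not> (\<exists>t\<in>triples. e \<in> legs t)" "\<not> (\<exists>t\<in>triples. e' \<in> legs t)"
    using label_in_triples_iff[of e] label_in_triples_iff[of e'] assms(4) by auto
  then have "Min e = Min e'" "Max e = Max e'"
    using assms(4) unfolding label_def by simp_all
  then have "e = e'"
    using card_2_Min_Max assms(1,2) by metis
  with assms(3) show ?thesis
    by simp
qed

lemma col_eq_iff: "col e = col e' \<longleftrightarrow> label e = label e'"
  using inj_J unfolding col_def by (simp add: inj_eq)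

lemma col_fibre_small: "\<exists>K. finite K \<and> card K \<le> 2 \<and> {e\<in>pairs UNIV. col e = \<xi>} \<subseteq> K"
proof (cases "{e\<in>pairs UNIV. col e = \<xi>} = {}")
  case True
  then show ?thesis
    by (intro exI[of _ "{}"]) simp
next
  case False
  then obtain e0 where e0: "card e0 = 2" "col e0 = \<xi>"
    unfolding pairs_def by blast
  have common: "\<exists>t\<in>triples. e0 \<in> legs t \<and> e \<in> legs t"
    if "e \<in> {e\<in>pairs UNIV. col e = \<xi>}" "e \<noteq> e0" for e
    using label_eq_imp_common_triple[OF e0(1), of e] that e0(2)
    unfolding pairs_def col_eq_iff[symmetric] by auto
  show ?thesis
  proof (cases "\<exists>t\<in>triples. e0 \<in> legs t")
    case True
    then obtain t where t: "t \<in> triples" "e0 \<in> legs t"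
      by blast
    have "{e\<in>pairs UNIV. col e = \<xi>} \<subseteq> legs t"
      using common triples_leg_unique t by blast
    moreover have "finite (legs t)" "card (legs t) \<le> 2"
      unfolding legs_def by (auto split: prod.split simp: card_insert_if)
    ultimately show ?thesis
      by blast
  next
    case False
    then have "{e\<in>pairs UNIV. col e = \<xi>} \<subseteq> {e0}"
      using common by blast
    then show ?thesis
      by (intro exI[of _ "{e0}"]) simp
  qed
qed

lemma two_bounded_col: "two_bounded col"
  unfolding two_bounded_def
  using col_fibre_small by (meson card_mono finite_subset order_trans)

lemma col_legs_eq:
  assumes "aligned k G x0 x1 x2"
  shows "col {x0, x2} = col {x1, x2}"
proof -
  have "(x0, x1, x2) \<in> triples"
    using assms unfolding triples_def by blast
  then show ?thesis
    using label_leg[of "(x0, x1, x2)"] unfolding col_def legs_def by simp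
qed

lemma col_eq_imp_aligned:
  assumes "card e = 2" "card e' = 2" "e \<noteq> e'" "col e = col e'"
  obtains k G x0 x1 x2 where "aligned k G x0 x1 x2" "e \<union> e' = {x0, x1, x2}"
proof -
  obtain t where "t \<in> triples" "e \<in> legs t" "e' \<in> legs t"
    using label_eq_imp_common_triple assms unfolding col_eq_iff by blast
  moreover obtain k G x0 x1 x2 where "t = (x0, x1, x2)" and al: "aligned k G x0 x1 x2"
    using \<open>t \<in> triples\<close> unfolding triples_def by blast
  ultimately have "e \<union> e' = {x0, x1, x2}"
    using assms(3) unfolding legs_def by auto
  then show thesis
    using that al by blast
qed

lemma injective_set_col_iff:
  "injective_set col A \<longleftrightarrow> (\<forall>k G x0 x1 x2. aligned k G x0 x1 x2 \<longrightarrow> \<not> {x0, x1, x2} \<subseteq> A)"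
proof
  assume inj: "injective_set col A"
  show "\<forall>k G x0 x1 x2. aligned k G x0 x1 x2 \<longrightarrow> \<not> {x0, x1, x2} \<subseteq> A"
  proof (intro allI impI notI)
    fix k G x0 x1 x2 assume al: "aligned k G x0 x1 x2" and "{x0, x1, x2} \<subseteq> A"
    then have "{x0, x2} \<in> pairs A" "{x1, x2} \<in> pairs A"
      using aligned_less[OF al] unfolding pairs_def by auto
    then have "{x0, x2} = {x1, x2}"
      using inj_onD[OF inj[unfolded injective_set_def]] col_legs_eq[OF al] by blast
    then show False
      using aligned_less[OF al] by (auto simp: doubleton_eq_iff)
  qed
next
  assume no_triple: "\<forall>k G x0 x1 x2. aligned k G x0 x1 x2 \<longrightarrow> \<not> {x0, x1, x2} \<subseteq> A"
  show "injective_set col A"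
    unfolding injective_set_def
  proof (rule inj_onI, rule ccontr)
    fix e e' assume e: "e \<in> pairs A" "e' \<in> pairs A" "col e = col e'" "e \<noteq> e'"
    moreover have "card e = 2" "card e' = 2"
      using e(1,2) unfolding pairs_def by auto
    ultimately obtain k G x0 x1 x2 where "aligned k G x0 x1 x2" "e \<union> e' = {x0, x1, x2}"
      using col_eq_imp_aligned by blast
    moreover have "e \<union> e' \<subseteq> A"
      using e(1,2) unfolding pairs_def by auto
    ultimately show False
      using no_triple by auto
  qed
qed

lemma injective_set_Un_copy:
  assumes "F \<in> level FF (Suc k)" "c0 \<subseteq> block k F 0" "c1 = inc_map (block k F 0) (block k F 1) ` c0"
    and "injective_set col c0" "injective_set col c1"
  shows "injective_set col (c0 \<union> c1)"
  unfolding injective_set_col_iff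
proof (intro allI impI notI)
  fix k' G x0 x1 x2 assume al: "aligned k' G x0 x1 x2" and "{x0, x1, x2} \<subseteq> c0 \<union> c1"
  then have "{x0, x1, x2} \<subseteq> c0 \<or> {x0, x1, x2} \<subseteq> c1"
    by (rule aligned_subset_copies[OF assms(1-3)])
  then show False
    using assms(4,5)[unfolded injective_set_col_iff, rule_format, OF al] by blast
qed

end

lemma injective_set_singleton: "injective_set c {b}"
proof -
  have "pairs {b} = {}"
  proof (rule equals0I)
    fix e assume "e \<in> pairs {b}"
    then have "e \<subseteq> {b}" "card e = 2"
      unfolding pairs_def by auto
    then show False
      using card_mono[of "{b}" e] by simp
  qed
  then show ?thesis
    unfolding injective_set_def by simp
qed

locale scheme3_capturing = scheme3_coloring FF m r J
  for FF :: "'a::linorder set set" and m r and J :: "'a \<times> 'a \<times> 'a \<Rightarrow> 'a" +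
  assumes capturing: "capturing 3 FF (\<lambda>_. 3) r"
begin

lemma captured_copies:
  assumes "\<forall>s\<in>S. finite s" and "uncountable S"
  obtains k F c0 c1 c2 where "F \<in> level FF (Suc k)" "c0 \<in> S" "c1 \<in> S" "c2 \<in> S" "c0 \<noteq> c1"
    "c0 \<subseteq> block k F 0" "c0 - rt k F \<noteq> {}"
    "c1 = inc_map (block k F 0) (block k F 1) ` c0" "c2 = inc_map (block k F 0) (block k F 2) ` c0"
proof -
  have "\<forall>k. \<exists>C\<subseteq>S. finite C \<and> card C = 3 \<and> (\<exists>l>k. \<exists>F. captures FF (\<lambda>_. 3) r l F C)"
    using capturing assms unfolding capturing_def by simp
  then obtain C l F where C: "C \<subseteq> S" "card C = 3" "captures FF (\<lambda>_. 3) r l F C"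
    by blast
  obtain k c0 c1 c2 where "F \<in> level FF (Suc k)" "C = {c0, c1, c2}" "c0 \<noteq> c1"
    "c0 \<subseteq> block k F 0" "c0 - rt k F \<noteq> {}"
    "c1 = inc_map (block k F 0) (block k F 1) ` c0" "c2 = inc_map (block k F 0) (block k F 2) ` c0"
    by (rule captures_three[OF C(3,2)])
  then show thesis
    using that[of F k c0 c1 c2] C(1) by simp
qed

lemma countable_if_injective:
  assumes "injective_set col A"
  shows "countable A"
proof (rule ccontr)
  assume "uncountable A"
  moreover have "inj_on (\<lambda>a. {a}) A"
    by (simp add: inj_on_def)
  ultimately have uncountable: "uncountable ((\<lambda>a. {a}) ` A)"
    using countable_image_inj_on by blast
  have finite: "\<forall>s\<in>(\<lambda>a. {a}) ` A. finite s"
    by auto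
  obtain k F c0 c1 c2 where F: "F \<in> level FF (Suc k)"
    and c: "c0 \<in> (\<lambda>a. {a}) ` A" "c1 \<in> (\<lambda>a. {a}) ` A" "c2 \<in> (\<lambda>a. {a}) ` A" "c0 \<noteq> c1"
      "c0 \<subseteq> block k F 0" "c0 - rt k F \<noteq> {}"
      "c1 = inc_map (block k F 0) (block k F 1) ` c0" "c2 = inc_map (block k F 0) (block k F 2) ` c0"
    by (rule captured_copies[OF finite uncountable])
  then obtain a where a: "a \<in> A" "c0 = {a}"
    by blast
  let ?a1 = "inc_map (block k F 0) (block k F 1) a" and ?a2 = "inc_map (block k F 0) (block k F 2) a"
  have "aligned k F a ?a1 ?a2"
    unfolding aligned_def using F c(5,6) a(2) by simp
  moreover have "{a, ?a1, ?a2} \<subseteq> A"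
    using a c(2,3,7,8) by auto
  ultimately show False
    using assms unfolding injective_set_col_iff by blast
qed

lemma ccc_finite_injective_sets: "is_ccc {p. finite p \<and> injective_set col p} stronger"
  unfolding is_ccc_def
proof (intro allI impI)
  let ?P = "{p. finite p \<and> injective_set col p}"
  fix A assume A: "A \<subseteq> ?P"
    and antichain: "\<forall>p\<in>A. \<forall>q\<in>A. p \<noteq> q \<longrightarrow> \<not> compatible ?P stronger p q"
  show "countable A"
  proof (rule ccontr)
    assume uncountable: "uncountable A"
    have finite: "\<forall>s\<in>A. finite s"
      using A by blast
    obtain k F c0 c1 c2 where F: "F \<in> level FF (Suc k)"
      and c: "c0 \<in> A" "c1 \<in> A" "c2 \<in> A" "c0 \<noteq> c1" "c0 \<subseteq> block k F 0" "c0 - rt k F \<noteq> {}"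
        "c1 = inc_map (block k F 0) (block k F 1) ` c0" "c2 = inc_map (block k F 0) (block k F 2) ` c0"
      by (rule captured_copies[OF finite uncountable])
    have "c0 \<in> ?P" "c1 \<in> ?P"
      using A c(1,2) by auto
    then have "c0 \<union> c1 \<in> ?P"
      using injective_set_Un_copy[OF F c(5,7)] by simp
    then have "compatible ?P stronger c0 c1"
      unfolding compatible_def by blast
    then show False
      using antichain c(1,2,4) by blast
  qed
qed

end

section \<open>A type with three blocks at every level\<close>

text \<open>\<open>type3_r (k + 1)\<close> is the first component of the \<open>k\<close>-th pair in the enumeration
  \<open>prod_decode\<close>, so every value recurs infinitely often.\<close>

definition type3_r :: "nat \<Rightarrow> nat" where
  "type3_r k = (case k of 0 \<Rightarrow> 0 | Suc j \<Rightarrow> fst (prod_decode j))"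

fun type3_m :: "nat \<Rightarrow> nat" where
  "type3_m 0 = 1"
| "type3_m (Suc k) = type3_r (Suc k) + (type3_m k - type3_r (Suc k)) * 3"

lemma type3_r_Suc_le: "type3_r (Suc k) \<le> k"
  using le_prod_encode_1[of "fst (prod_decode k)" "snd (prod_decode k)"]
  unfolding type3_r_def by simp

lemma less_type3_m: "k < type3_m k"
proof (induction k)
  case (Suc k)
  then show ?case
    using type3_r_Suc_le[of k] by simp
qed simp

lemma is_type_type3: "is_type type3_m (\<lambda>_. 3) type3_r"
  unfolding is_type_def
proof (intro conjI allI impI)
  fix x
  have "range (\<lambda>b. Suc (prod_encode (x, b))) \<subseteq> {k. k \<ge> 1 \<and> type3_r k = x}"
    unfolding type3_r_def by auto
  moreover have "infinite (range (\<lambda>b. Suc (prod_encode (x, b))))"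
    by (rule range_inj_infinite) (simp add: inj_def)
  ultimately show "infinite {k. k \<ge> 1 \<and> type3_r k = x}"
    using infinite_super by blast
next
  fix k
  show "type3_r (Suc k) < type3_m k"
    using type3_r_Suc_le less_type3_m le_less_trans by blast
qed simp_all

theorem mainTheorem8:
  assumes "omega1_type TYPE('a::wellorder)"
    and "CA 3 TYPE('a)"
  shows "\<exists>c :: 'a set \<Rightarrow> 'a.
           two_bounded c \<and>
           (\<forall>A. injective_set c A \<longrightarrow> countable A) \<and>
           ccc_destructible c"
proof -
  have "\<exists>FF :: 'a set set. construction_scheme FF type3_m (\<lambda>_. 3) type3_r \<and>
      capturing 3 FF (\<lambda>_. 3) type3_r"
    using assms(2) is_type_type3 unfolding CA_def by simp
  then obtain FF :: "'a set set"
    where "construction_scheme FF type3_m (\<lambda>_. 3) type3_r" "capturing 3 FF (\<lambda>_. 3) type3_r"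
    by blast
  moreover obtain J :: "'a \<times> 'a \<times> 'a \<Rightarrow> 'a" where "inj J"
    using ex_inj_triple assms(1) unfolding omega1_type_def by (meson countable_finite)
  ultimately interpret scheme3_capturing FF type3_m type3_r J
    using is_type_type3 by unfold_locales
  have "ccc_destructible col"
  proof (rule ccc_destructibleI[OF assms(1) _ ccc_finite_injective_sets])
    show "\<forall>b. \<exists>p\<in>{p. finite p \<and> injective_set col p}. b \<in> p"
      using injective_set_singleton[of col] by auto
  qed simp
  then show ?thesis
    using two_bounded_col countable_if_injective by (intro exI[of _ col]) simp
qed

end
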